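(* The map $\mu:\mathbb{P}(n)\times\mathbb{P}(n)\to\mathbb{P}(n)$, $\mu(A,B)=A*B$, satisfies: (1) $A*B$ is a $d_\infty$-midpoint of $A$ and $B$, i.e. $d_\infty(A,A*B)=d_\infty(A*B,B)=\tfrac12 d_\infty(A,B)$; (2) $\mu$ is continuous; (3) $\mu(A,B)=\mu(B,A)$ for all $A,B\in\mathbb{P}(n)$; (4) $\mu(XAX^*,XBX^* )=X\mu(A,B)X^*$ for all $A,B\in\mathbb{P}(n)$ and all invertible $n\times n$ complex matrices $X$; (5) $(aA)*(bB)=\sqrt{ab}\,(A*B)$ for all real $a,b>0$ and $A,B\in\mathbb{P}(n)$; (6) if $A\preceq B$ then $A\preceq\mu(A,B)\preceq B$; (7) if $\Sigma_1\preceq\Sigma_2$ in $\mathbb{P}(n)$, then $\lambda_{\max}(\mu(I,\Sigma_1))\le\lambda_{\max}(\mu(I,\Sigma_2))$ and $\lambda_{\min}(\mu(I,\Sigma_1))\le\lambda_{\min}(\mu(I,\Sigma_2))$.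
   Context: $\mathbb{P}(n)$ denotes the cone of $n\times n$ positive definite Hermitian matrices; $X^*$ is the conjugate transpose; $\preceq$ is the Löwner order ($A\preceq B$ iff $B-A$ is positive semidefinite). The Thompson metric is $d_{\infty}(A,B)=\|\log A^{-1/2}BA^{-1/2}\|_{\infty}=\max\{\log\lambda_{\max}(BA^{-1}),\log\lambda_{\max}(AB^{-1})\}$. For $A,B\in\mathbb{P}(n)$, with $\lambda_{\max},\lambda_{\min}$ the largest and smallest eigenvalues of $BA^{-1}$, define $A*B=\frac{1}{\sqrt{\lambda_{\min}}+\sqrt{\lambda_{\max}}}\left(B+\sqrt{\lambda_{\min}\lambda_{\max}}\,A\right)$. *)

theory Defs
  imports "HOL-Analysis.Analysis"
begin

definition cadj :: "complex^'n^'m \<Rightarrow> complex^'m^'n" where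
  "cadj A = (\<chi> i j. cnj (A $ j $ i))"

definition hermitian :: "complex^'n^'n \<Rightarrow> bool" where
  "hermitian A \<longleftrightarrow> cadj A = A"

definition qform :: "complex^'n^'n \<Rightarrow> complex^'n \<Rightarrow> complex" where
  "qform A x = (\<Sum>i\<in>UNIV. cnj (x $ i) * ((A *v x) $ i))"

definition posdef :: "complex^'n^'n \<Rightarrow> bool" where
  "posdef A \<longleftrightarrow> hermitian A \<and> (\<forall>x. x \<noteq> 0 \<longrightarrow> Re (qform A x) > 0)"

definition possemidef :: "complex^'n^'n \<Rightarrow> bool" where
  "possemidef A \<longleftrightarrow> hermitian A \<and> (\<forall>x. Re (qform A x) \<ge> 0)"

definition PD :: "(complex^'n^'n) set" where
  "PD = {A. posdef A}"

definition loewner_le :: "complex^'n^'n \<Rightarrow> complex^'n^'n \<Rightarrow> bool" where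
  "loewner_le A B \<longleftrightarrow> possemidef (B - A)"

text \<open>Real eigenvalues of a complex matrix (for the matrices considered here,
  all eigenvalues are real and positive).\<close>
definition real_eigenvalues :: "complex^'n^'n \<Rightarrow> real set" where
  "real_eigenvalues M = {r. \<exists>v. v \<noteq> 0 \<and> M *v v = complex_of_real r *s v}"

definition lam_max :: "complex^'n^'n \<Rightarrow> real" where
  "lam_max M = Max (real_eigenvalues M)"

definition lam_min :: "complex^'n^'n \<Rightarrow> real" where
  "lam_min M = Min (real_eigenvalues M)"

definition thompson :: "complex^'n^'n \<Rightarrow> complex^'n^'n \<Rightarrow> real" where
  "thompson A B = max (ln (lam_max (B ** matrix_inv A))) (ln (lam_max (A ** matrix_inv B)))"

definition mu :: "complex^'n^'n \<Rightarrow> complex^'n^'n \<Rightarrow> complex^'n^'n" where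
  "mu A B = (let lmax = lam_max (B ** matrix_inv A); lmin = lam_min (B ** matrix_inv A)
             in (1 / (sqrt lmin + sqrt lmax)) *\<^sub>R (B + sqrt (lmin * lmax) *\<^sub>R A))"

end

theory Submission
  imports Defs
begin

(*
  For A, B positive definite, lam_min and lam_max of B A^-1 are the best constants m, M with
  m (x* A x) <= x* B x <= M (x* A x), and both are attained: they are the extreme values of the
  Rayleigh quotient of the pencil B x = r A x, whose critical points are its eigenvectors.
  With s = sqrt m and t = sqrt M, the quadratic form of A * B = (B + s t A) / (s + t) satisfies
  s (x* A x) <= x* (A * B) x <= t (x* A x) and s (x* (A * B) x) <= x* B x <= t (x* (A * B) x),
  with equality at the same two extremal vectors. So both pairs (A, A * B) and (A * B, B) have
  extremal ratios sqrt m and sqrt M, which gives the midpoint property, the Loewner bounds and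
  the monotonicity of the eigenvalues of I * S. Symmetry, congruence invariance and homogeneity
  hold because the extremal ratios only depend on the two quadratic forms up to a change of
  variables and scaling, and continuity because nearby positive definite matrices have
  quadratic forms within a factor close to 1 of each other.
*)

lemma inner_vec_complex: "x \<bullet> y = Re (\<Sum>i\<in>UNIV. cnj (x$i) * y$i)"
  for x y :: "complex^'n"
  by (simp add: inner_vec_def inner_complex_def)

lemma Re_qform: "Re (qform A x) = x \<bullet> (A *v x)"
  by (simp add: qform_def inner_vec_complex)

lemma inner_cadj_left: "(cadj X *v x) \<bullet> y = x \<bullet> (X *v y)"
  for X :: "complex^'n^'m"
proof -
  have "(\<Sum>j\<in>UNIV. cnj ((cadj X *v x)$j) * y$j) = (\<Sum>i\<in>UNIV. cnj (x$i) * (X *v y)$i)"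
    by (simp add: matrix_vector_mult_def cadj_def sum_distrib_left sum_distrib_right mult_ac
        sum.swap[of _ "UNIV::'n set"])
  then show ?thesis
    by (simp add: inner_vec_complex)
qed

lemma hermitian_inner_swap: "hermitian A \<Longrightarrow> (A *v x) \<bullet> y = x \<bullet> (A *v y)"
  by (metis hermitian_def inner_cadj_left)

lemma matrix_vector_mult_scaleR_right: "X *v (c *\<^sub>R x) = c *\<^sub>R (X *v x)"
  for X :: "complex^'n^'m"
  using linear_scale[OF matrix_vector_mul_bounded_linear[THEN bounded_linear.linear]] .

lemma scaleR_matrix_vector_mult: "(c *\<^sub>R X) *v x = c *\<^sub>R (X *v x)"
  for X :: "complex^'n^'m"
  by (simp add: vec_eq_iff matrix_vector_mult_def scaleR_sum_right)

lemma cadj_add: "cadj (A + B) = cadj A + cadj B"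
  and cadj_diff: "cadj (A - B) = cadj A - cadj B"
  and cadj_scaleR: "cadj (c *\<^sub>R A) = c *\<^sub>R cadj A"
  and cadj_mult: "cadj (X ** Y) = cadj Y ** cadj X"
  and cadj_cadj: "cadj (cadj A) = A"
  and cadj_mat1: "cadj (mat 1 :: complex^'n^'n) = mat 1"
  by (simp_all add: cadj_def vec_eq_iff matrix_matrix_mult_def mult.commute mat_def)

lemma hermitian_add: "hermitian A \<Longrightarrow> hermitian B \<Longrightarrow> hermitian (A + B)"
  and hermitian_diff: "hermitian A \<Longrightarrow> hermitian B \<Longrightarrow> hermitian (A - B)"
  and hermitian_scaleR: "hermitian A \<Longrightarrow> hermitian (c *\<^sub>R A)"
  and hermitian_congruence: "hermitian A \<Longrightarrow> hermitian (X ** A ** cadj X)"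
  and hermitian_mat1: "hermitian (mat 1)"
  by (simp_all add: hermitian_def cadj_add cadj_diff cadj_scaleR cadj_mult cadj_cadj cadj_mat1
      matrix_mul_assoc)

lemma PD_iff: "A \<in> PD \<longleftrightarrow> hermitian A \<and> (\<forall>x. x \<noteq> 0 \<longrightarrow> 0 < x \<bullet> (A *v x))"
  by (simp add: PD_def posdef_def Re_qform)

lemma PD_hermitian: "A \<in> PD \<Longrightarrow> hermitian A"
  and PD_quadratic_pos: "A \<in> PD \<Longrightarrow> x \<noteq> 0 \<Longrightarrow> 0 < x \<bullet> (A *v x)"
  by (simp_all add: PD_iff)

lemma PD_quadratic_nonneg: "A \<in> PD \<Longrightarrow> 0 \<le> x \<bullet> (A *v x)"
  by (cases "x = 0") (auto dest: PD_quadratic_pos[of A x])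

lemma loewner_le_iff:
  "hermitian A \<Longrightarrow> hermitian B \<Longrightarrow>
    loewner_le A B \<longleftrightarrow> (\<forall>x. x \<bullet> (A *v x) \<le> x \<bullet> (B *v x))"
  by (simp add: loewner_le_def possemidef_def Re_qform hermitian_diff
      matrix_vector_mult_diff_rdistrib inner_diff_right)

lemma mat1_PD: "mat 1 \<in> PD"
  by (simp add: PD_iff hermitian_mat1)

lemma PD_invertible: "A \<in> PD \<Longrightarrow> invertible A"
  unfolding invertible_left_inverse matrix_left_invertible_ker
  by (metis PD_quadratic_pos inner_zero_right less_irrefl)

lemma matrix_inv_right: "invertible A \<Longrightarrow> A ** matrix_inv A = mat 1"
  and matrix_inv_left: "invertible A \<Longrightarrow> matrix_inv A ** A = mat 1"
  using someI_ex[of "\<lambda>A'. A ** A' = mat 1 \<and> A' ** A = mat 1"]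
  by (simp_all add: invertible_def matrix_inv_def)

lemma matrix_inv_mat1: "matrix_inv (mat 1 :: 'a::field^'n^'n) = mat 1"
  by (metis invertible_def matrix_inv_left matrix_mul_rid)

lemma semidefinite_quadratic_zero:
  assumes "hermitian C" and psd: "\<And>y. 0 \<le> y \<bullet> (C *v y)" and "x \<bullet> (C *v x) = 0"
  shows "C *v x = 0"
proof -
  define w where "w = C *v x"
  define a where "a = w \<bullet> w"
  define b where "b = w \<bullet> (C *v w)"
  have "(x + t *\<^sub>R w) \<bullet> (C *v (x + t *\<^sub>R w)) = 2 * t * a + t\<^sup>2 * b" for t
    using assms(1,3) hermitian_inner_swap[OF assms(1), of x w]
    by (simp add: a_def b_def w_def matrix_vector_right_distrib matrix_vector_mult_scaleR_right
        inner_add_left inner_add_right power2_eq_square algebra_simps)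
  then have quad: "0 \<le> 2 * t * a + t\<^sup>2 * b" for t
    by (metis psd)
  have "b \<ge> 0" using psd by (simp add: b_def)
  have "a = 0"
  proof (rule ccontr)
    assume "a \<noteq> 0"
    then have "a > 0" by (simp add: a_def)
    have "2 * (- a / (b + 1)) * a + (- a / (b + 1))\<^sup>2 * b = - a\<^sup>2 * (b + 2) / (b + 1)\<^sup>2"
      using \<open>b \<ge> 0\<close> by (simp add: divide_simps power2_eq_square) (simp add: algebra_simps)
    also have "\<dots> < 0"
      using \<open>a > 0\<close> \<open>b \<ge> 0\<close> by (simp add: divide_neg_pos mult_pos_pos)
    finally show False using quad by (metis not_le)
  qed
  then show ?thesis by (simp add: a_def w_def)
qed

lemma ex_max_ratio:
  assumes A: "A \<in> PD" and B: "B \<in> PD"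
  shows "\<exists>x0 c. x0 \<noteq> 0 \<and> x0 \<bullet> (B *v x0) = c * (x0 \<bullet> (A *v x0))
    \<and> (\<forall>x. x \<bullet> (B *v x) \<le> c * (x \<bullet> (A *v x)))"
proof -
  let ?S = "sphere (0::complex^'n) 1"
  let ?ratio = "\<lambda>x. (x \<bullet> (B *v x)) / (x \<bullet> (A *v x))"
  have pos: "0 < u \<bullet> (A *v u)" if "u \<in> ?S" for u
    using that by (auto intro: PD_quadratic_pos[OF A])
  have "continuous_on ?S ?ratio"
    by (intro continuous_intros) (metis pos less_irrefl)
  moreover have "?S \<noteq> {}" by simp
  ultimately obtain x0 where x0: "x0 \<in> ?S" and max: "\<And>u. u \<in> ?S \<Longrightarrow> ?ratio u \<le> ?ratio x0"
    using continuous_attains_sup[OF compact_sphere] by blast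
  define c where "c = ?ratio x0"
  have "x \<bullet> (B *v x) \<le> c * (x \<bullet> (A *v x))" for x
  proof (cases "x = 0")
    case False
    define u where "u = (1 / norm x) *\<^sub>R x"
    have "u \<in> ?S" and "u \<noteq> 0" using False by (simp_all add: u_def)
    then have "u \<bullet> (B *v u) \<le> c * (u \<bullet> (A *v u))"
      using max[of u] PD_quadratic_pos[OF A, of u] by (simp add: c_def pos_divide_le_eq)
    then have "(norm x)\<^sup>2 * (u \<bullet> (B *v u)) \<le> c * ((norm x)\<^sup>2 * (u \<bullet> (A *v u)))"
      by (metis mult.left_commute mult_left_mono zero_le_power2)
    moreover have "(norm x)\<^sup>2 * (u \<bullet> (M *v u)) = x \<bullet> (M *v x)" for M
      using False by (simp add: u_def matrix_vector_mult_scaleR_right power2_eq_square)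
    ultimately show ?thesis by simp
  qed simp
  moreover have "x0 \<noteq> 0" using x0 by auto
  moreover have "x0 \<bullet> (B *v x0) = c * (x0 \<bullet> (A *v x0))"
    using PD_quadratic_pos[OF A \<open>x0 \<noteq> 0\<close>] by (simp add: c_def)
  ultimately show ?thesis by blast
qed

lemma ex_min_ratio:
  assumes A: "A \<in> PD" and B: "B \<in> PD"
  shows "\<exists>x0 c. x0 \<noteq> 0 \<and> x0 \<bullet> (B *v x0) = c * (x0 \<bullet> (A *v x0))
    \<and> (\<forall>x. c * (x \<bullet> (A *v x)) \<le> x \<bullet> (B *v x))"
proof -
  obtain x0 c where x0: "x0 \<noteq> 0" "x0 \<bullet> (A *v x0) = c * (x0 \<bullet> (B *v x0))"
    and le: "\<And>x. x \<bullet> (A *v x) \<le> c * (x \<bullet> (B *v x))"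
    using ex_max_ratio[OF B A] by blast
  have "c > 0"
    using x0 PD_quadratic_pos[OF A x0(1)] PD_quadratic_pos[OF B x0(1)] zero_less_mult_pos2 by metis
  then have "(1 / c) * (x \<bullet> (A *v x)) \<le> x \<bullet> (B *v x)" for x
    using le[of x] by (simp add: field_simps)
  moreover have "x0 \<bullet> (B *v x0) = (1 / c) * (x0 \<bullet> (A *v x0))"
    using x0(2) \<open>c > 0\<close> by simp
  ultimately show ?thesis using x0(1) by blast
qed

lemma pencil_eigenvalue_iff:
  assumes "A \<in> PD"
  shows "r \<in> real_eigenvalues (B ** matrix_inv A) \<longleftrightarrow> (\<exists>x. x \<noteq> 0 \<and> B *v x = r *\<^sub>R (A *v x))"
proof -
  note inv = matrix_inv_right[OF PD_invertible[OF assms]] matrix_inv_left[OF PD_invertible[OF assms]]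
  have smult: "complex_of_real r *s v = r *\<^sub>R v" for v :: "complex^'n"
    by (simp add: vec_eq_iff) (simp add: scaleR_conv_of_real)
  have A0: "A *v x = 0 \<longleftrightarrow> x = 0" for x
    using PD_invertible[OF assms] unfolding invertible_left_inverse matrix_left_invertible_ker
    by auto
  show ?thesis
  proof
    assume "r \<in> real_eigenvalues (B ** matrix_inv A)"
    then obtain v where "v \<noteq> 0" "(B ** matrix_inv A) *v v = r *\<^sub>R v"
      by (auto simp: real_eigenvalues_def smult)
    moreover have "A *v (matrix_inv A *v v) = v"
      by (simp add: matrix_vector_mul_assoc inv(1))
    ultimately show "\<exists>x. x \<noteq> 0 \<and> B *v x = r *\<^sub>R (A *v x)"
      by (metis A0 matrix_vector_mul_assoc)
  next
    assume "\<exists>x. x \<noteq> 0 \<and> B *v x = r *\<^sub>R (A *v x)"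
    then obtain x where "x \<noteq> 0" and eig: "B *v x = r *\<^sub>R (A *v x)" by blast
    then have "A *v x \<noteq> 0" by (simp add: A0)
    moreover have "(B ** matrix_inv A) *v (A *v x) = r *\<^sub>R (A *v x)"
      by (simp add: matrix_vector_mul_assoc matrix_mul_assoc[symmetric] inv(2) eig)
    ultimately show "r \<in> real_eigenvalues (B ** matrix_inv A)"
      unfolding real_eigenvalues_def smult mem_Collect_eq by (intro exI[of _ "A *v x"] conjI)
  qed
qed

lemma pencil_eigenvectors_orthogonal:
  assumes "hermitian A" "hermitian B" "B *v x = r *\<^sub>R (A *v x)" "B *v y = s *\<^sub>R (A *v y)" "r \<noteq> s"
  shows "(A *v x) \<bullet> y = 0"
proof -
  have "r * ((A *v x) \<bullet> y) = (B *v x) \<bullet> y" using assms(3) by simp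
  also have "\<dots> = x \<bullet> (B *v y)" by (rule hermitian_inner_swap[OF assms(2)])
  also have "\<dots> = s * ((A *v x) \<bullet> y)"
    using assms(4) hermitian_inner_swap[OF assms(1)] by simp
  finally show ?thesis using assms(5) by simp
qed

lemma finite_pencil_eigenvalues:
  assumes A: "A \<in> PD" and B: "B \<in> PD"
  shows "finite (real_eigenvalues (B ** matrix_inv A))"
proof -
  let ?E = "real_eigenvalues (B ** matrix_inv A)"
  define v where "v r = (SOME x. x \<noteq> 0 \<and> B *v x = r *\<^sub>R (A *v x))" for r
  have v: "v r \<noteq> 0" "B *v v r = r *\<^sub>R (A *v v r)" if "r \<in> ?E" for r
    using someI_ex[OF that[unfolded pencil_eigenvalue_iff[OF A]]] by (simp_all add: v_def)
  have "inj_on v ?E"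
  proof (rule inj_onI)
    fix r s assume "r \<in> ?E" "s \<in> ?E" "v r = v s"
    then have "r * (v r \<bullet> (A *v v r)) = s * (v r \<bullet> (A *v v r))"
      using v by (metis inner_scaleR_right)
    then show "r = s" using PD_quadratic_pos[OF A v(1)[OF \<open>r \<in> ?E\<close>]] by simp
  qed
  moreover have "independent (v ` ?E)"
    unfolding independent_explicit_module
  proof (intro allI impI)
    fix T u w assume T: "finite T" "T \<subseteq> v ` ?E" and comb: "(\<Sum>w\<in>T. u w *\<^sub>R w) = 0"
      and "w \<in> T"
    then obtain r where r: "r \<in> ?E" "w = v r" by blast
    have orth: "(A *v w) \<bullet> w' = 0" if "w' \<in> T" "w' \<noteq> w" for w'
    proof -
      obtain s where "s \<in> ?E" "w' = v s" using T(2) \<open>w' \<in> T\<close> by blast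
      then show ?thesis
        using pencil_eigenvectors_orthogonal[OF PD_hermitian[OF A] PD_hermitian[OF B]] v r that
        by metis
    qed
    have "0 = (A *v w) \<bullet> (\<Sum>w'\<in>T. u w' *\<^sub>R w')" by (simp add: comb)
    also have "\<dots> = u w * ((A *v w) \<bullet> w)"
      using T(1) \<open>w \<in> T\<close> orth
      by (auto simp: sum.remove inner_add_right inner_sum_right intro!: sum.neutral)
    finally show "u w = 0"
      using PD_quadratic_pos[OF A v(1)[OF r(1)]] hermitian_inner_swap[OF PD_hermitian[OF A]] r(2)
      by (metis mult_eq_0_iff less_irrefl)
  qed
  ultimately show ?thesis
    using independent_bound finite_imageD by blast
qed

lemma max_ratio_eigenvector:
  assumes "hermitian A" "hermitian B" and le: "\<And>x. x \<bullet> (B *v x) \<le> c * (x \<bullet> (A *v x))"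
    and "x0 \<bullet> (B *v x0) = c * (x0 \<bullet> (A *v x0))"
  shows "B *v x0 = c *\<^sub>R (A *v x0)"
proof -
  have "(c *\<^sub>R A - B) *v x0 = 0"
    using assms le[of x0]
    by (intro semidefinite_quadratic_zero)
      (auto simp: hermitian_diff hermitian_scaleR matrix_vector_mult_diff_rdistrib
        scaleR_matrix_vector_mult inner_diff_right)
  then show ?thesis
    by (simp add: matrix_vector_mult_diff_rdistrib scaleR_matrix_vector_mult)
qed

lemma min_ratio_eigenvector:
  assumes "hermitian A" "hermitian B" and le: "\<And>x. c * (x \<bullet> (A *v x)) \<le> x \<bullet> (B *v x)"
    and "x0 \<bullet> (B *v x0) = c * (x0 \<bullet> (A *v x0))"
  shows "B *v x0 = c *\<^sub>R (A *v x0)"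
proof -
  have "(B - c *\<^sub>R A) *v x0 = 0"
    using assms le[of x0]
    by (intro semidefinite_quadratic_zero)
      (auto simp: hermitian_diff hermitian_scaleR matrix_vector_mult_diff_rdistrib
        scaleR_matrix_vector_mult inner_diff_right)
  then show ?thesis
    by (simp add: matrix_vector_mult_diff_rdistrib scaleR_matrix_vector_mult)
qed

lemma pencil_eigenvalue_ratio:
  assumes "A \<in> PD" "r \<in> real_eigenvalues (B ** matrix_inv A)"
  obtains x where "x \<noteq> 0" "x \<bullet> (B *v x) = r * (x \<bullet> (A *v x))"
  using assms by (auto simp: pencil_eigenvalue_iff)

lemma lam_max_ratio:
  assumes A: "A \<in> PD" and B: "B \<in> PD"
  shows "x \<bullet> (B *v x) \<le> lam_max (B ** matrix_inv A) * (x \<bullet> (A *v x))"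
    and "\<exists>x. x \<noteq> 0 \<and> x \<bullet> (B *v x) = lam_max (B ** matrix_inv A) * (x \<bullet> (A *v x))"
proof -
  obtain x0 c where x0: "x0 \<noteq> 0" "x0 \<bullet> (B *v x0) = c * (x0 \<bullet> (A *v x0))"
    and le: "\<And>x. x \<bullet> (B *v x) \<le> c * (x \<bullet> (A *v x))"
    using ex_max_ratio[OF A B] by blast
  have "c \<in> real_eigenvalues (B ** matrix_inv A)"
    using max_ratio_eigenvector[OF PD_hermitian[OF A] PD_hermitian[OF B] le x0(2)] x0(1)
    by (auto simp: pencil_eigenvalue_iff[OF A])
  moreover have "r \<le> c" if r: "r \<in> real_eigenvalues (B ** matrix_inv A)" for r
  proof -
    obtain x where "x \<noteq> 0" "x \<bullet> (B *v x) = r * (x \<bullet> (A *v x))"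
      using pencil_eigenvalue_ratio[OF A r] .
    then show ?thesis using le[of x] PD_quadratic_pos[OF A] by simp
  qed
  ultimately have "lam_max (B ** matrix_inv A) = c"
    unfolding lam_max_def by (intro Max_eqI finite_pencil_eigenvalues A B)
  then show "x \<bullet> (B *v x) \<le> lam_max (B ** matrix_inv A) * (x \<bullet> (A *v x))"
    and "\<exists>x. x \<noteq> 0 \<and> x \<bullet> (B *v x) = lam_max (B ** matrix_inv A) * (x \<bullet> (A *v x))"
    using le x0 by auto
qed

lemma lam_min_ratio:
  assumes A: "A \<in> PD" and B: "B \<in> PD"
  shows "lam_min (B ** matrix_inv A) * (x \<bullet> (A *v x)) \<le> x \<bullet> (B *v x)"
    and "\<exists>x. x \<noteq> 0 \<and> x \<bullet> (B *v x) = lam_min (B ** matrix_inv A) * (x \<bullet> (A *v x))"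
proof -
  obtain x0 c where x0: "x0 \<noteq> 0" "x0 \<bullet> (B *v x0) = c * (x0 \<bullet> (A *v x0))"
    and le: "\<And>x. c * (x \<bullet> (A *v x)) \<le> x \<bullet> (B *v x)"
    using ex_min_ratio[OF A B] by blast
  have "c \<in> real_eigenvalues (B ** matrix_inv A)"
    using min_ratio_eigenvector[OF PD_hermitian[OF A] PD_hermitian[OF B] le x0(2)] x0(1)
    by (auto simp: pencil_eigenvalue_iff[OF A])
  moreover have "c \<le> r" if r: "r \<in> real_eigenvalues (B ** matrix_inv A)" for r
  proof -
    obtain x where "x \<noteq> 0" "x \<bullet> (B *v x) = r * (x \<bullet> (A *v x))"
      using pencil_eigenvalue_ratio[OF A r] .
    then show ?thesis using le[of x] PD_quadratic_pos[OF A] by simp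
  qed
  ultimately have "lam_min (B ** matrix_inv A) = c"
    unfolding lam_min_def by (intro Min_eqI finite_pencil_eigenvalues A B)
  then show "lam_min (B ** matrix_inv A) * (x \<bullet> (A *v x)) \<le> x \<bullet> (B *v x)"
    and "\<exists>x. x \<noteq> 0 \<and> x \<bullet> (B *v x) = lam_min (B ** matrix_inv A) * (x \<bullet> (A *v x))"
    using le x0 by auto
qed

lemma lam_max_le_iff:
  assumes "A \<in> PD" "B \<in> PD"
  shows "lam_max (B ** matrix_inv A) \<le> c \<longleftrightarrow> (\<forall>x. x \<bullet> (B *v x) \<le> c * (x \<bullet> (A *v x)))"
proof
  assume "lam_max (B ** matrix_inv A) \<le> c"
  then show "\<forall>x. x \<bullet> (B *v x) \<le> c * (x \<bullet> (A *v x))"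
    using lam_max_ratio(1)[OF assms] PD_quadratic_nonneg[OF assms(1)]
    by (meson mult_right_mono order_trans)
next
  assume "\<forall>x. x \<bullet> (B *v x) \<le> c * (x \<bullet> (A *v x))"
  moreover obtain x where "x \<noteq> 0" "x \<bullet> (B *v x) = lam_max (B ** matrix_inv A) * (x \<bullet> (A *v x))"
    using lam_max_ratio(2)[OF assms] by blast
  ultimately show "lam_max (B ** matrix_inv A) \<le> c"
    using PD_quadratic_pos[OF assms(1)] by (metis mult_le_cancel_right_pos)
qed

lemma le_lam_min_iff:
  assumes "A \<in> PD" "B \<in> PD"
  shows "c \<le> lam_min (B ** matrix_inv A) \<longleftrightarrow> (\<forall>x. c * (x \<bullet> (A *v x)) \<le> x \<bullet> (B *v x))"
proof
  assume "c \<le> lam_min (B ** matrix_inv A)"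
  then show "\<forall>x. c * (x \<bullet> (A *v x)) \<le> x \<bullet> (B *v x)"
    using lam_min_ratio(1)[OF assms] PD_quadratic_nonneg[OF assms(1)]
    by (meson mult_right_mono order_trans)
next
  assume "\<forall>x. c * (x \<bullet> (A *v x)) \<le> x \<bullet> (B *v x)"
  moreover obtain x where "x \<noteq> 0" "x \<bullet> (B *v x) = lam_min (B ** matrix_inv A) * (x \<bullet> (A *v x))"
    using lam_min_ratio(2)[OF assms] by blast
  ultimately show "c \<le> lam_min (B ** matrix_inv A)"
    using PD_quadratic_pos[OF assms(1)] by (metis mult_le_cancel_right_pos)
qed

lemma lam_max_eqI:
  assumes "A \<in> PD" "B \<in> PD" and "\<And>x. x \<bullet> (B *v x) \<le> c * (x \<bullet> (A *v x))"
    and "x0 \<noteq> 0" "x0 \<bullet> (B *v x0) = c * (x0 \<bullet> (A *v x0))"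
  shows "lam_max (B ** matrix_inv A) = c"
proof (rule antisym)
  show "lam_max (B ** matrix_inv A) \<le> c"
    using assms by (simp add: lam_max_le_iff)
  show "c \<le> lam_max (B ** matrix_inv A)"
    using lam_max_ratio(1)[OF assms(1,2), of x0] assms(5) PD_quadratic_pos[OF assms(1,4)]
    by simp
qed

lemma lam_min_eqI:
  assumes "A \<in> PD" "B \<in> PD" and "\<And>x. c * (x \<bullet> (A *v x)) \<le> x \<bullet> (B *v x)"
    and "x0 \<noteq> 0" "x0 \<bullet> (B *v x0) = c * (x0 \<bullet> (A *v x0))"
  shows "lam_min (B ** matrix_inv A) = c"
proof (rule antisym)
  show "c \<le> lam_min (B ** matrix_inv A)"
    using assms by (simp add: le_lam_min_iff)
  show "lam_min (B ** matrix_inv A) \<le> c"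
    using lam_min_ratio(1)[OF assms(1,2), of x0] assms(5) PD_quadratic_pos[OF assms(1,4)]
    by simp
qed

lemma lam_min_pos: "A \<in> PD \<Longrightarrow> B \<in> PD \<Longrightarrow> 0 < lam_min (B ** matrix_inv A)"
  by (metis lam_min_ratio(2) PD_quadratic_pos zero_less_mult_pos2)

lemma lam_max_pos: "A \<in> PD \<Longrightarrow> B \<in> PD \<Longrightarrow> 0 < lam_max (B ** matrix_inv A)"
  by (metis lam_max_ratio(2) PD_quadratic_pos zero_less_mult_pos2)

lemma lam_max_swap:
  assumes "A \<in> PD" "B \<in> PD"
  shows "lam_max (A ** matrix_inv B) = 1 / lam_min (B ** matrix_inv A)"
proof -
  obtain x0 where "x0 \<noteq> 0" "x0 \<bullet> (B *v x0) = lam_min (B ** matrix_inv A) * (x0 \<bullet> (A *v x0))"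
    using lam_min_ratio(2)[OF assms] by blast
  then show ?thesis
    using lam_min_ratio(1)[OF assms] lam_min_pos[OF assms]
    by (intro lam_max_eqI[OF assms(2,1)]) (auto simp: field_simps)
qed

lemma lam_min_swap:
  "A \<in> PD \<Longrightarrow> B \<in> PD \<Longrightarrow> lam_min (A ** matrix_inv B) = 1 / lam_max (B ** matrix_inv A)"
  by (simp add: lam_max_swap)

lemma lam_pencil_transfer:
  assumes A: "A \<in> PD" "A' \<in> PD" and B: "B \<in> PD" "B' \<in> PD"
    and "surj f" "0 < a" "0 < b"
    and qA: "\<And>x. x \<bullet> (A' *v x) = a * (f x \<bullet> (A *v f x))"
    and qB: "\<And>x. x \<bullet> (B' *v x) = b * (f x \<bullet> (B *v f x))"
  shows "lam_max (B' ** matrix_inv A') = b / a * lam_max (B ** matrix_inv A)"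
    and "lam_min (B' ** matrix_inv A') = b / a * lam_min (B ** matrix_inv A)"
proof -
  have nz: "y \<noteq> 0" if "f y \<noteq> 0" for y
    using that qA[of y] PD_quadratic_pos[OF A(1) that] \<open>0 < a\<close> by auto
  obtain x0 where "x0 \<noteq> 0" "x0 \<bullet> (B *v x0) = lam_max (B ** matrix_inv A) * (x0 \<bullet> (A *v x0))"
    using lam_max_ratio(2)[OF A(1) B(1)] by blast
  moreover obtain y0 where "f y0 = x0" using \<open>surj f\<close> by (metis surjD)
  ultimately show "lam_max (B' ** matrix_inv A') = b / a * lam_max (B ** matrix_inv A)"
    using lam_max_ratio(1)[OF A(1) B(1)] \<open>0 < a\<close> \<open>0 < b\<close>
    by (intro lam_max_eqI[OF A(2) B(2) _ nz]) (auto simp: qA qB field_simps)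
  obtain x1 where "x1 \<noteq> 0" "x1 \<bullet> (B *v x1) = lam_min (B ** matrix_inv A) * (x1 \<bullet> (A *v x1))"
    using lam_min_ratio(2)[OF A(1) B(1)] by blast
  moreover obtain y1 where "f y1 = x1" using \<open>surj f\<close> by (metis surjD)
  ultimately show "lam_min (B' ** matrix_inv A') = b / a * lam_min (B ** matrix_inv A)"
    using lam_min_ratio(1)[OF A(1) B(1)] \<open>0 < a\<close> \<open>0 < b\<close>
    by (intro lam_min_eqI[OF A(2) B(2) _ nz]) (auto simp: qA qB field_simps)
qed

lemma mu_eq:
  fixes A B :: "complex^'n^'n"
  defines "s \<equiv> sqrt (lam_min (B ** matrix_inv A))" and "t \<equiv> sqrt (lam_max (B ** matrix_inv A))"
  shows "mu A B = (1 / (s + t)) *\<^sub>R B + (s * t / (s + t)) *\<^sub>R A"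
  by (simp add: mu_def Let_def s_def t_def real_sqrt_mult scaleR_add_right)

lemma quadratic_mu:
  fixes A B :: "complex^'n^'n"
  defines "s \<equiv> sqrt (lam_min (B ** matrix_inv A))" and "t \<equiv> sqrt (lam_max (B ** matrix_inv A))"
  shows "x \<bullet> (mu A B *v x) = (x \<bullet> (B *v x) + s * t * (x \<bullet> (A *v x))) / (s + t)"
  by (simp add: mu_eq s_def t_def scaleR_matrix_vector_mult matrix_vector_mult_add_rdistrib
      inner_add_right add_divide_distrib)

lemma mu_PD:
  assumes "A \<in> PD" "B \<in> PD"
  shows "mu A B \<in> PD"
  unfolding PD_iff
proof (intro conjI allI impI)
  show "hermitian (mu A B)"
    using assms by (simp add: mu_def Let_def hermitian_add hermitian_scaleR PD_hermitian)
  show "0 < x \<bullet> (mu A B *v x)" if "x \<noteq> 0" for x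
    unfolding quadratic_mu
    using PD_quadratic_pos[OF assms(1) that] PD_quadratic_pos[OF assms(2) that]
      lam_min_pos[OF assms] lam_max_pos[OF assms]
    by (simp add: add_pos_pos)
qed

lemma mean_ratio_bounds:
  fixes s t a b :: real
  assumes "0 < s" "0 < t" "s\<^sup>2 * a \<le> b" "b \<le> t\<^sup>2 * a"
  shows "s * a \<le> (b + s * t * a) / (s + t)" and "(b + s * t * a) / (s + t) \<le> t * a"
    and "s * ((b + s * t * a) / (s + t)) \<le> b" and "b \<le> t * ((b + s * t * a) / (s + t))"
  using assms by (simp_all add: field_simps power2_eq_square)

lemma mean_ratio_eq:
  fixes s t a b :: real
  assumes "0 < s" "0 < t"
  shows "b = s\<^sup>2 * a \<Longrightarrow> (b + s * t * a) / (s + t) = s * a"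
    and "b = t\<^sup>2 * a \<Longrightarrow> (b + s * t * a) / (s + t) = t * a"
  using assms by (simp_all add: field_simps power2_eq_square)

lemma lam_mu:
  assumes A: "A \<in> PD" and B: "B \<in> PD"
  shows "lam_max (mu A B ** matrix_inv A) = sqrt (lam_max (B ** matrix_inv A))"
    and "lam_min (mu A B ** matrix_inv A) = sqrt (lam_min (B ** matrix_inv A))"
    and "lam_max (B ** matrix_inv (mu A B)) = sqrt (lam_max (B ** matrix_inv A))"
    and "lam_min (B ** matrix_inv (mu A B)) = sqrt (lam_min (B ** matrix_inv A))"
proof -
  define s where "s = sqrt (lam_min (B ** matrix_inv A))"
  define t where "t = sqrt (lam_max (B ** matrix_inv A))"
  have "0 < s" "0 < t"
    using lam_min_pos[OF A B] lam_max_pos[OF A B] by (simp_all add: s_def t_def)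
  have bounds: "s\<^sup>2 * (x \<bullet> (A *v x)) \<le> x \<bullet> (B *v x)" "x \<bullet> (B *v x) \<le> t\<^sup>2 * (x \<bullet> (A *v x))" for x
    using lam_min_ratio(1)[OF A B] lam_max_ratio(1)[OF A B] lam_min_pos[OF A B] lam_max_pos[OF A B]
    by (simp_all add: s_def t_def)
  have quadratic: "x \<bullet> (mu A B *v x) = (x \<bullet> (B *v x) + s * t * (x \<bullet> (A *v x))) / (s + t)" for x
    by (simp add: quadratic_mu s_def t_def)
  note mu_bounds = mean_ratio_bounds[OF \<open>0 < s\<close> \<open>0 < t\<close> bounds, folded quadratic]
  obtain xm where xm: "xm \<noteq> 0" "xm \<bullet> (B *v xm) = s\<^sup>2 * (xm \<bullet> (A *v xm))"
    using lam_min_ratio(2)[OF A B] lam_min_pos[OF A B] by (auto simp: s_def)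
  obtain xM where xM: "xM \<noteq> 0" "xM \<bullet> (B *v xM) = t\<^sup>2 * (xM \<bullet> (A *v xM))"
    using lam_max_ratio(2)[OF A B] lam_max_pos[OF A B] by (auto simp: t_def)
  have mu_xm: "xm \<bullet> (mu A B *v xm) = s * (xm \<bullet> (A *v xm))"
    using mean_ratio_eq(1)[OF \<open>0 < s\<close> \<open>0 < t\<close> xm(2)] by (simp add: quadratic)
  have mu_xM: "xM \<bullet> (mu A B *v xM) = t * (xM \<bullet> (A *v xM))"
    using mean_ratio_eq(2)[OF \<open>0 < s\<close> \<open>0 < t\<close> xM(2)] by (simp add: quadratic)
  note mu = mu_PD[OF A B]
  show "lam_max (mu A B ** matrix_inv A) = sqrt (lam_max (B ** matrix_inv A))"
    using mu_bounds(2) mu_xM by (intro lam_max_eqI[OF A mu _ xM(1)]) (simp_all add: t_def)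
  show "lam_min (mu A B ** matrix_inv A) = sqrt (lam_min (B ** matrix_inv A))"
    using mu_bounds(1) mu_xm by (intro lam_min_eqI[OF A mu _ xm(1)]) (simp_all add: s_def)
  show "lam_max (B ** matrix_inv (mu A B)) = sqrt (lam_max (B ** matrix_inv A))"
    using mu_bounds(4) mu_xM xM(2)
    by (intro lam_max_eqI[OF mu B _ xM(1)]) (simp_all add: t_def power2_eq_square)
  show "lam_min (B ** matrix_inv (mu A B)) = sqrt (lam_min (B ** matrix_inv A))"
    using mu_bounds(3) mu_xm xm(2)
    by (intro lam_min_eqI[OF mu B _ xm(1)]) (simp_all add: s_def power2_eq_square)
qed

lemma thompson_pencil:
  "A \<in> PD \<Longrightarrow> B \<in> PD \<Longrightarrow>
    thompson A B = max (ln (lam_max (B ** matrix_inv A))) (- ln (lam_min (B ** matrix_inv A)))"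
  by (simp add: thompson_def lam_max_swap ln_div lam_min_pos)

lemma thompson_mu:
  assumes "A \<in> PD" "B \<in> PD"
  shows "thompson A (mu A B) = thompson A B / 2" and "thompson (mu A B) B = thompson A B / 2"
  using lam_min_pos[OF assms] lam_max_pos[OF assms]
  by (simp_all add: thompson_pencil assms mu_PD lam_mu ln_sqrt max_def)

lemma mu_commute:
  assumes "A \<in> PD" "B \<in> PD"
  shows "mu A B = mu B A"
proof -
  define s where "s = sqrt (lam_min (B ** matrix_inv A))"
  define t where "t = sqrt (lam_max (B ** matrix_inv A))"
  have "0 < s" "0 < t"
    using lam_min_pos[OF assms] lam_max_pos[OF assms] by (simp_all add: s_def t_def)
  have "sqrt (lam_min (A ** matrix_inv B)) = 1 / t" "sqrt (lam_max (A ** matrix_inv B)) = 1 / s"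
    by (simp_all add: lam_min_swap[OF assms] lam_max_swap[OF assms] s_def t_def real_sqrt_divide)
  then have "mu B A = (1 / (1 / t + 1 / s)) *\<^sub>R A + (1 / t * (1 / s) / (1 / t + 1 / s)) *\<^sub>R B"
    by (simp add: mu_eq)
  also have "\<dots> = (1 / (s + t)) *\<^sub>R B + (s * t / (s + t)) *\<^sub>R A"
    using \<open>0 < s\<close> \<open>0 < t\<close> by (simp add: field_simps)
  finally show ?thesis by (simp add: mu_eq s_def t_def)
qed

lemma invertible_cadj: "invertible X \<Longrightarrow> invertible (cadj X)"
  for X :: "complex^'n^'n"
  by (metis cadj_mat1 cadj_mult invertible_def matrix_inv_left matrix_inv_right)

lemma quadratic_congruence:
  "x \<bullet> ((X ** A ** cadj X) *v x) = (cadj X *v x) \<bullet> (A *v (cadj X *v x))"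
  by (simp add: inner_cadj_left matrix_vector_mul_assoc[symmetric])

lemma congruence_PD:
  fixes X :: "complex^'n^'n"
  assumes "A \<in> PD" "invertible X"
  shows "X ** A ** cadj X \<in> PD"
proof -
  have "cadj X *v x \<noteq> 0" if "x \<noteq> 0" for x
    using that invertible_cadj[OF assms(2)]
    unfolding invertible_left_inverse matrix_left_invertible_ker by blast
  then show ?thesis
    using assms(1) by (auto simp: PD_iff hermitian_congruence quadratic_congruence)
qed

lemma matrix_add_rdistrib: "(A + B) ** C = A ** C + B ** C"
  by (simp add: matrix_matrix_mult_def vec_eq_iff sum.distrib distrib_right)

lemma mu_congruence:
  fixes X :: "complex^'n^'n"
  assumes A: "A \<in> PD" and B: "B \<in> PD" and X: "invertible X"
  shows "mu (X ** A ** cadj X) (X ** B ** cadj X) = X ** mu A B ** cadj X"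
proof -
  have surj: "surj ((*v) (cadj X))"
    using invertible_cadj[OF X]
    unfolding invertible_right_inverse matrix_right_invertible_surjective .
  have quadratic: "x \<bullet> ((X ** M ** cadj X) *v x) = 1 * ((cadj X *v x) \<bullet> (M *v (cadj X *v x)))"
    for M x by (simp add: quadratic_congruence)
  have transfer:
      "lam_max ((X ** B ** cadj X) ** matrix_inv (X ** A ** cadj X)) = lam_max (B ** matrix_inv A)"
      "lam_min ((X ** B ** cadj X) ** matrix_inv (X ** A ** cadj X)) = lam_min (B ** matrix_inv A)"
    using lam_pencil_transfer[OF A congruence_PD[OF A X] B congruence_PD[OF B X] surj
        zero_less_one zero_less_one quadratic quadratic] by simp_all
  show ?thesis
    using transfer by (simp add: mu_eq matrix_add_ldistrib matrix_add_rdistrib matrix_scalar_ac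
        scalar_matrix_assoc)
qed

lemma scaleR_PD: "0 < c \<Longrightarrow> A \<in> PD \<Longrightarrow> c *\<^sub>R A \<in> PD"
  by (simp add: PD_iff hermitian_scaleR scaleR_matrix_vector_mult)

lemma mu_scaleR:
  assumes A: "A \<in> PD" and B: "B \<in> PD" and "0 < a" "0 < b"
  shows "mu (a *\<^sub>R A) (b *\<^sub>R B) = sqrt (a * b) *\<^sub>R mu A B"
proof -
  define s where "s = sqrt (lam_min (B ** matrix_inv A))"
  define t where "t = sqrt (lam_max (B ** matrix_inv A))"
  define r where "r = sqrt (b / a)"
  have "0 < s" "0 < t" "0 < r"
    using lam_min_pos[OF A B] lam_max_pos[OF A B] \<open>0 < a\<close> \<open>0 < b\<close>
    by (simp_all add: s_def t_def r_def)
  have ra: "r * a = sqrt (a * b)" and rb: "b / r = sqrt (a * b)"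
    using \<open>0 < a\<close> \<open>0 < b\<close>
    by (simp_all add: r_def real_sqrt_divide real_sqrt_mult field_simps real_sqrt_mult_self)
  have "x \<bullet> ((c *\<^sub>R M) *v x) = c * (id x \<bullet> (M *v id x))" for c and M :: "complex^'n^'n" and x
    by (simp add: scaleR_matrix_vector_mult)
  note transfer = lam_pencil_transfer[OF A scaleR_PD[OF \<open>0 < a\<close> A] B scaleR_PD[OF \<open>0 < b\<close> B]
      surj_id \<open>0 < a\<close> \<open>0 < b\<close> this this]
  have "sqrt (lam_min ((b *\<^sub>R B) ** matrix_inv (a *\<^sub>R A))) = r * s"
    and "sqrt (lam_max ((b *\<^sub>R B) ** matrix_inv (a *\<^sub>R A))) = r * t"
    by (simp_all only: transfer r_def s_def t_def real_sqrt_mult)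
  then have "mu (a *\<^sub>R A) (b *\<^sub>R B)
      = (1 / (r * s + r * t) * b) *\<^sub>R B + (r * s * (r * t) / (r * s + r * t) * a) *\<^sub>R A"
    by (simp add: mu_eq)
  also have "1 / (r * s + r * t) * b = sqrt (a * b) / (s + t)"
    using \<open>0 < r\<close> \<open>0 < s\<close> \<open>0 < t\<close> unfolding rb[symmetric] distrib_left[symmetric]
    by (simp add: field_simps)
  also have "r * s * (r * t) / (r * s + r * t) * a = sqrt (a * b) * (s * t / (s + t))"
    using \<open>0 < r\<close> \<open>0 < s\<close> \<open>0 < t\<close> unfolding ra[symmetric] distrib_left[symmetric]
    by (simp add: divide_simps)
  also have "(sqrt (a * b) / (s + t)) *\<^sub>R B + (sqrt (a * b) * (s * t / (s + t))) *\<^sub>R A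
      = sqrt (a * b) *\<^sub>R mu A B"
    by (simp add: mu_eq s_def t_def scaleR_add_right)
  finally show ?thesis .
qed

lemma mu_loewner:
  assumes A: "A \<in> PD" and B: "B \<in> PD" and "loewner_le A B"
  shows "loewner_le A (mu A B)" and "loewner_le (mu A B) B"
proof -
  note mu = mu_PD[OF A B]
  have "1 \<le> lam_min (B ** matrix_inv A)"
    using \<open>loewner_le A B\<close> by (simp add: le_lam_min_iff A B loewner_le_iff PD_hermitian)
  then have s: "1 \<le> sqrt (lam_min (B ** matrix_inv A))" by simp
  have "x \<bullet> (A *v x) \<le> x \<bullet> (mu A B *v x)" for x
    using lam_min_ratio(1)[OF A mu, of x] mult_right_mono[OF s PD_quadratic_nonneg[OF A, of x]]
    by (simp add: lam_mu A B)
  moreover have "x \<bullet> (mu A B *v x) \<le> x \<bullet> (B *v x)" for x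
    using lam_min_ratio(1)[OF mu B, of x] mult_right_mono[OF s PD_quadratic_nonneg[OF mu, of x]]
    by (simp add: lam_mu A B)
  ultimately show "loewner_le A (mu A B)" and "loewner_le (mu A B) B"
    by (simp_all add: loewner_le_iff PD_hermitian A B mu)
qed

lemma lam_pencil_mono:
  assumes A: "A \<in> PD" and B: "B \<in> PD" "B' \<in> PD"
    and le: "\<And>x. x \<bullet> (B *v x) \<le> x \<bullet> (B' *v x)"
  shows "lam_max (B ** matrix_inv A) \<le> lam_max (B' ** matrix_inv A)"
    and "lam_min (B ** matrix_inv A) \<le> lam_min (B' ** matrix_inv A)"
  using order_trans[OF le lam_max_ratio(1)[OF A B(2)]] order_trans[OF lam_min_ratio(1)[OF A B(1)] le]
  by (simp_all add: lam_max_le_iff le_lam_min_iff A B)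

lemma lam_mu_identity:
  assumes "S \<in> PD"
  shows "lam_max (mu (mat 1) S) = sqrt (lam_max S)" and "lam_min (mu (mat 1) S) = sqrt (lam_min S)"
  using lam_mu(1,2)[OF mat1_PD assms] by (simp_all add: matrix_inv_mat1)

lemma lam_mu_identity_mono:
  assumes "S \<in> PD" "S' \<in> PD" "loewner_le S S'"
  shows "lam_max (mu (mat 1) S) \<le> lam_max (mu (mat 1) S')"
    and "lam_min (mu (mat 1) S) \<le> lam_min (mu (mat 1) S')"
proof -
  have "\<And>x. x \<bullet> (S *v x) \<le> x \<bullet> (S' *v x)"
    using assms by (simp add: loewner_le_iff PD_hermitian)
  from lam_pencil_mono[OF mat1_PD assms(1,2) this]
  show "lam_max (mu (mat 1) S) \<le> lam_max (mu (mat 1) S')"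
    and "lam_min (mu (mat 1) S) \<le> lam_min (mu (mat 1) S')"
    by (simp_all add: lam_mu_identity assms matrix_inv_mat1)
qed

lemma quadratic_diff_bound:
  "\<exists>K>0. \<forall>(E :: complex^'n^'n) A x. \<bar>x \<bullet> (E *v x) - x \<bullet> (A *v x)\<bar> \<le> K * norm (E - A) * (norm x)\<^sup>2"
proof -
  have "bilinear ((*v) :: complex^'n^'n \<Rightarrow> _)"
    unfolding bilinear_def
    by (auto intro!: linearI simp: matrix_vector_mult_add_rdistrib scaleR_matrix_vector_mult
        matrix_vector_right_distrib matrix_vector_mult_scaleR_right)
  then obtain K where "0 < K" and K: "\<And>(E :: complex^'n^'n) x. norm (E *v x) \<le> K * norm E * norm x"
    using bilinear_bounded_pos by blast
  have "\<bar>x \<bullet> (E *v x) - x \<bullet> (A *v x)\<bar> \<le> K * norm (E - A) * (norm x)\<^sup>2"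
    for E A :: "complex^'n^'n" and x :: "complex^'n"
  proof -
    have "\<bar>x \<bullet> (E *v x) - x \<bullet> (A *v x)\<bar> = \<bar>x \<bullet> ((E - A) *v x)\<bar>"
      by (simp add: matrix_vector_mult_diff_rdistrib inner_diff_right)
    also have "\<dots> \<le> norm x * norm ((E - A) *v x)"
      by (rule Cauchy_Schwarz_ineq2)
    also have "\<dots> \<le> norm x * (K * norm (E - A) * norm x)"
      by (rule mult_left_mono[OF K norm_ge_zero])
    finally show ?thesis
      by (simp add: power2_eq_square mult_ac)
  qed
  with \<open>0 < K\<close> show ?thesis by blast
qed

lemma quadratic_perturbation:
  fixes A :: "complex^'n^'n"
  assumes "A \<in> PD" "1 < k"
  shows "\<exists>\<delta>>0. \<forall>E. norm (E - A) < \<delta> \<longrightarrow>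
    (\<forall>x. x \<bullet> (A *v x) \<le> k * (x \<bullet> (E *v x)) \<and> x \<bullet> (E *v x) \<le> k * (x \<bullet> (A *v x)))"
proof -
  define \<alpha> where "\<alpha> = lam_min (A ** matrix_inv (mat 1))"
  have "0 < \<alpha>" using lam_min_pos[OF mat1_PD assms(1)] by (simp add: \<alpha>_def)
  have coercive: "\<alpha> * (norm x)\<^sup>2 \<le> x \<bullet> (A *v x)" for x
    using lam_min_ratio(1)[OF mat1_PD assms(1)] by (simp add: \<alpha>_def power2_norm_eq_inner)
  obtain K where "0 < K"
    and K: "\<And>E x. \<bar>x \<bullet> (E *v x) - x \<bullet> (A *v x)\<bar> \<le> K * norm (E - A) * (norm x)\<^sup>2"
    using quadratic_diff_bound by blast
  define \<eta> where "\<eta> = 1 - 1 / k"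
  have "0 < \<eta>" "1 - \<eta> = 1 / k"
    using \<open>1 < k\<close> by (simp_all add: \<eta>_def)
  have "k - (1 + \<eta>) = (k - 1)\<^sup>2 / k"
    using \<open>1 < k\<close> by (simp add: \<eta>_def field_simps power2_eq_square)
  then have "1 + \<eta> \<le> k"
    using \<open>1 < k\<close> by (metis diff_ge_0_iff_ge divide_nonneg_pos zero_le_power2 zero_less_one less_trans)
  show ?thesis
  proof (intro exI[of _ "\<eta> * \<alpha> / K"] conjI allI impI)
    show "0 < \<eta> * \<alpha> / K" using \<open>0 < \<eta>\<close> \<open>0 < \<alpha>\<close> \<open>0 < K\<close> by simp
    fix E :: "complex^'n^'n" and x :: "complex^'n" assume "norm (E - A) < \<eta> * \<alpha> / K"
    then have "K * norm (E - A) * (norm x)\<^sup>2 \<le> \<eta> * (\<alpha> * (norm x)\<^sup>2)"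
      using \<open>0 < K\<close> unfolding mult.assoc[symmetric]
      by (intro mult_right_mono) (simp_all add: pos_less_divide_eq mult.commute less_imp_le)
    also have "\<dots> \<le> \<eta> * (x \<bullet> (A *v x))"
      using coercive \<open>0 < \<eta>\<close> by (simp add: mult_left_mono)
    finally have close: "\<bar>x \<bullet> (E *v x) - x \<bullet> (A *v x)\<bar> \<le> \<eta> * (x \<bullet> (A *v x))"
      using K[of x E] by linarith
    have "x \<bullet> (E *v x) \<le> (1 + \<eta>) * (x \<bullet> (A *v x))"
      using close by (simp add: algebra_simps)
    also have "\<dots> \<le> k * (x \<bullet> (A *v x))"
      using \<open>1 + \<eta> \<le> k\<close> PD_quadratic_nonneg[OF assms(1)] by (simp add: mult_right_mono)
    finally show "x \<bullet> (E *v x) \<le> k * (x \<bullet> (A *v x))" .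
    have "(1 - \<eta>) * (x \<bullet> (A *v x)) \<le> x \<bullet> (E *v x)"
      using close by (simp add: left_diff_distrib abs_le_iff)
    then show "x \<bullet> (A *v x) \<le> k * (x \<bullet> (E *v x))"
      using \<open>1 - \<eta> = 1 / k\<close> \<open>1 < k\<close> by (simp add: field_simps)
  qed
qed

lemma lam_max_perturbation:
  assumes A: "A \<in> PD" "A' \<in> PD" and B: "B \<in> PD" "B' \<in> PD" and "0 < k"
    and hA: "\<And>x. x \<bullet> (A' *v x) \<le> k * (x \<bullet> (A *v x))"
    and hB: "\<And>x. x \<bullet> (B *v x) \<le> k * (x \<bullet> (B' *v x))"
  shows "lam_max (B ** matrix_inv A) \<le> k\<^sup>2 * lam_max (B' ** matrix_inv A')"
  unfolding lam_max_le_iff[OF A(1) B(1)]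
proof
  fix x
  have "x \<bullet> (B *v x) \<le> k * (lam_max (B' ** matrix_inv A') * (x \<bullet> (A' *v x)))"
    using hB[of x] lam_max_ratio(1)[OF A(2) B(2), of x] \<open>0 < k\<close>
    by (meson mult_left_mono less_imp_le order_trans)
  also have "\<dots> \<le> k * (lam_max (B' ** matrix_inv A') * (k * (x \<bullet> (A *v x))))"
    using hA[of x] lam_max_pos[OF A(2) B(2)] \<open>0 < k\<close> by (simp add: mult_left_mono)
  finally show "x \<bullet> (B *v x) \<le> k\<^sup>2 * lam_max (B' ** matrix_inv A') * (x \<bullet> (A *v x))"
    by (simp add: power2_eq_square mult_ac)
qed

lemma tendsto_by_ratio_bounds:
  fixes f :: "'a \<Rightarrow> real"
  assumes "0 < L" and "\<And>k. 1 < k \<Longrightarrow> eventually (\<lambda>x. L \<le> k * f x \<and> f x \<le> k * L) F"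
  shows "(f \<longlongrightarrow> L) F"
proof (rule tendstoI)
  fix e :: real assume "0 < e"
  define k where "k = 1 + e / (2 * L)"
  have "1 < k" using \<open>0 < e\<close> \<open>0 < L\<close> by (simp add: k_def)
  have kL: "k * L = L + e / 2" and "(L - e / 2) * k = L - e\<^sup>2 / (4 * L)"
    using \<open>0 < L\<close> by (simp_all add: k_def field_simps power2_eq_square)
  then have "(L - e / 2) * k \<le> L" using \<open>0 < L\<close> by simp
  have close: "dist (f x) L < e" if "L \<le> k * f x" "f x \<le> k * L" for x
  proof -
    have "(L - e / 2) * k \<le> f x * k"
      using \<open>(L - e / 2) * k \<le> L\<close> that(1) by (simp add: mult.commute)
    then have "L - e / 2 \<le> f x" using \<open>1 < k\<close> by simp
    then show ?thesis using that(2) kL \<open>0 < e\<close> by (simp add: dist_real_def abs_less_iff)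
  qed
  show "eventually (\<lambda>x. dist (f x) L < e) F"
    using assms(2)[OF \<open>1 < k\<close>] by (rule eventually_mono) (blast intro: close)
qed

lemma lam_max_locally_close:
  assumes A0: "A0 \<in> PD" and B0: "B0 \<in> PD" and "1 < k"
  shows "\<exists>d>0. \<forall>A B. A \<in> PD \<longrightarrow> B \<in> PD \<longrightarrow> norm (A - A0) < d \<longrightarrow> norm (B - B0) < d \<longrightarrow>
    lam_max (B0 ** matrix_inv A0) \<le> k * lam_max (B ** matrix_inv A)
    \<and> lam_max (B ** matrix_inv A) \<le> k * lam_max (B0 ** matrix_inv A0)"
proof -
  have "1 < sqrt k" "0 < sqrt k" "(sqrt k)\<^sup>2 = k" using \<open>1 < k\<close> by simp_all
  obtain dA where "0 < dA" and dA: "\<And>A x. norm (A - A0) < dA \<Longrightarrow>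
      x \<bullet> (A0 *v x) \<le> sqrt k * (x \<bullet> (A *v x)) \<and> x \<bullet> (A *v x) \<le> sqrt k * (x \<bullet> (A0 *v x))"
    using quadratic_perturbation[OF A0 \<open>1 < sqrt k\<close>] by blast
  obtain dB where "0 < dB" and dB: "\<And>B x. norm (B - B0) < dB \<Longrightarrow>
      x \<bullet> (B0 *v x) \<le> sqrt k * (x \<bullet> (B *v x)) \<and> x \<bullet> (B *v x) \<le> sqrt k * (x \<bullet> (B0 *v x))"
    using quadratic_perturbation[OF B0 \<open>1 < sqrt k\<close>] by blast
  show ?thesis
  proof (intro exI[of _ "min dA dB"] conjI allI impI)
    show "0 < min dA dB" using \<open>0 < dA\<close> \<open>0 < dB\<close> by simp
    fix A B assume A: "A \<in> PD" and B: "B \<in> PD"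
      and "norm (A - A0) < min dA dB" "norm (B - B0) < min dA dB"
    with dA dB \<open>0 < sqrt k\<close>
    show "lam_max (B0 ** matrix_inv A0) \<le> k * lam_max (B ** matrix_inv A)"
      and "lam_max (B ** matrix_inv A) \<le> k * lam_max (B0 ** matrix_inv A0)"
      using lam_max_perturbation[OF A0 A B0 B, of "sqrt k"] lam_max_perturbation[OF A A0 B B0, of "sqrt k"]
      unfolding \<open>(sqrt k)\<^sup>2 = k\<close> by simp_all
  qed
qed

lemma continuous_on_lam_max:
  "continuous_on (PD \<times> PD) (\<lambda>p. lam_max (snd p ** matrix_inv (fst p)))"
  unfolding continuous_on_def
proof
  fix p0 :: "(complex^'n^'n) \<times> (complex^'n^'n)" assume "p0 \<in> PD \<times> PD"
  then obtain A0 B0 where p0: "p0 = (A0, B0)" and A0: "A0 \<in> PD" and B0: "B0 \<in> PD" by auto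
  show "((\<lambda>p. lam_max (snd p ** matrix_inv (fst p))) \<longlongrightarrow> lam_max (snd p0 ** matrix_inv (fst p0)))
      (at p0 within PD \<times> PD)"
  proof (rule tendsto_by_ratio_bounds)
    show "0 < lam_max (snd p0 ** matrix_inv (fst p0))"
      using lam_max_pos[OF A0 B0] by (simp add: p0)
    fix k :: real assume "1 < k"
    then obtain d where "0 < d" and d: "\<And>A B. A \<in> PD \<Longrightarrow> B \<in> PD \<Longrightarrow>
        norm (A - A0) < d \<Longrightarrow> norm (B - B0) < d \<Longrightarrow>
        lam_max (B0 ** matrix_inv A0) \<le> k * lam_max (B ** matrix_inv A)
        \<and> lam_max (B ** matrix_inv A) \<le> k * lam_max (B0 ** matrix_inv A0)"
      using lam_max_locally_close[OF A0 B0] by blast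
    have "norm (fst p - A0) < d" "norm (snd p - B0) < d" if "dist p p0 < d" for p
      using that dist_fst_le[of p p0] dist_snd_le[of p p0] by (simp_all add: p0 dist_norm)
    then show "\<forall>\<^sub>F p in at p0 within PD \<times> PD.
        lam_max (snd p0 ** matrix_inv (fst p0)) \<le> k * lam_max (snd p ** matrix_inv (fst p))
        \<and> lam_max (snd p ** matrix_inv (fst p)) \<le> k * lam_max (snd p0 ** matrix_inv (fst p0))"
      unfolding eventually_at using \<open>0 < d\<close> d by (auto simp: p0)
  qed
qed

lemma continuous_on_lam_min:
  "continuous_on (PD \<times> PD) (\<lambda>p. lam_min (snd p ** matrix_inv (fst p)))"
proof -
  have "continuous_on (PD \<times> PD) (\<lambda>p. lam_max (fst p ** matrix_inv (snd p)))"
    using continuous_on_compose2[OF continuous_on_lam_max continuous_on_swap, of "PD \<times> PD"]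
    by (simp add: product_swap)
  then have "continuous_on (PD \<times> PD) (\<lambda>p. 1 / lam_max (fst p ** matrix_inv (snd p)))"
    by (rule continuous_on_divide[OF continuous_on_const]) (auto dest: lam_max_pos)
  then show ?thesis
    by (rule continuous_on_eq) (auto simp: lam_min_swap)
qed

lemma continuous_on_mu: "continuous_on (PD \<times> PD) (\<lambda>(A, B). mu A B)"
proof -
  let ?m = "\<lambda>p. lam_min (snd p ** matrix_inv (fst p))"
  let ?M = "\<lambda>p. lam_max (snd p ** matrix_inv (fst p))"
  have eq: "(\<lambda>(A, B). mu A B)
      = (\<lambda>p. (1 / (sqrt (?m p) + sqrt (?M p))) *\<^sub>R (snd p + sqrt (?m p * ?M p) *\<^sub>R fst p))"
    by (auto simp: mu_def Let_def)
  have "\<forall>p\<in>PD \<times> PD. sqrt (?m p) + sqrt (?M p) \<noteq> 0"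
  proof
    fix p :: "(complex^'n^'n) \<times> (complex^'n^'n)" assume "p \<in> PD \<times> PD"
    then have "0 < ?m p" "0 < ?M p" using lam_min_pos lam_max_pos by (auto simp: mem_Times_iff)
    then show "sqrt (?m p) + sqrt (?M p) \<noteq> 0" by (metis add_pos_pos real_sqrt_gt_zero less_irrefl)
  qed
  then show ?thesis
    unfolding eq by (intro continuous_intros continuous_on_lam_min continuous_on_lam_max)
qed

theorem theorem1:
  shows "(\<forall>A B :: complex^'n^'n. A \<in> PD \<and> B \<in> PD \<longrightarrow> mu A B \<in> PD)
    \<and> (\<forall>A B :: complex^'n^'n. A \<in> PD \<and> B \<in> PD \<longrightarrow>
         thompson A (mu A B) = thompson A B / 2 \<and> thompson (mu A B) B = thompson A B / 2)
    \<and> continuous_on ((PD :: (complex^'n^'n) set) \<times> PD) (\<lambda>(A, B). mu A B)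
    \<and> (\<forall>A B :: complex^'n^'n. A \<in> PD \<and> B \<in> PD \<longrightarrow> mu A B = mu B A)
    \<and> (\<forall>(A :: complex^'n^'n) B (X :: complex^'n^'n). A \<in> PD \<and> B \<in> PD \<and> invertible X \<longrightarrow>
         mu (X ** A ** cadj X) (X ** B ** cadj X) = X ** mu A B ** cadj X)
    \<and> (\<forall>(A :: complex^'n^'n) B (a::real) (b::real). A \<in> PD \<and> B \<in> PD \<and> a > 0 \<and> b > 0 \<longrightarrow>
         mu (a *\<^sub>R A) (b *\<^sub>R B) = sqrt (a * b) *\<^sub>R mu A B)
    \<and> (\<forall>A B :: complex^'n^'n. A \<in> PD \<and> B \<in> PD \<and> loewner_le A B \<longrightarrow>
         loewner_le A (mu A B) \<and> loewner_le (mu A B) B)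
    \<and> (\<forall>S1 S2 :: complex^'n^'n. S1 \<in> PD \<and> S2 \<in> PD \<and> loewner_le S1 S2 \<longrightarrow>
         lam_max (mu (mat 1) S1) \<le> lam_max (mu (mat 1) S2)
         \<and> lam_min (mu (mat 1) S1) \<le> lam_min (mu (mat 1) S2))"
  by (intro conjI allI impI; (elim conjE)?)
    (simp_all add: mu_PD thompson_mu continuous_on_mu mu_commute mu_congruence mu_scaleR
      mu_loewner lam_mu_identity_mono)

end
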